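(* Let $G=(0^{a_1}1^{a_2}\cdots0^{a_{n-1}}1^{a_n})$ and $G'=(0^{b_1}1^{b_2}\cdots0^{b_{m-1}}1^{b_m})$ be connected threshold graphs, where all $a_i,b_j$ are positive integers and $n,m$ are even. Suppose $G$ and $G'$ have the same adjacency spectrum (with multiplicities). Then $n=m$, and $\gamma^{\mathbf a}_n(l)=\gamma^{\mathbf b}_n(l)$ for all $l=0,1,\dots,n$.
   Context: A threshold graph is built from a single vertex $v_1$ by repeatedly adding a vertex that is either isolated or dominating (adjacent to all previous vertices). Recording $v_1$ as $0$, and each later vertex as $0$ (isolated) or $1$ (dominating), a connected threshold graph on at least 2 vertices has binary sequence $0^{a_1}1^{a_2}\cdots0^{a_{n-1}}1^{a_n}$ with $n$ even and all $a_i\ge1$; it is denoted $(0^{a_1}1^{a_2}\cdots0^{a_{n-1}}1^{a_n})$. For $1\le l\le n$, $I_{n,l}$ is the set of strictly increasing sequences $(t_1,\dots,t_l)$ in $\{1,\dots,n\}$ with $t_i\equiv n+i-l\pmod2$ for all $i$. For a sequence $\mathbf a=(a_1,a_2,\dots)$ of positive integers, $\gamma^{\mathbf a}_n(l)=\sum_{(t_1,\dots,t_l)\in I_{n,l}}a_{t_1}\cdots a_{t_l}$ for $1\le l\le n$, and $\gamma^{\mathbf a}_n(0)=1$. *)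

theory Defs
  imports "Jordan_Normal_Form.Jordan_Normal_Form"
begin

(* Binary creation sequence 0^{a_1} 1^{a_2} ... 0^{a_{n-1}} 1^{a_n}; exponents a 1, ..., a n
   (the function a is indexed from 1).  True = 1 = dominating, False = 0 = isolated. *)
definition thr_seq :: "(nat \<Rightarrow> nat) \<Rightarrow> nat \<Rightarrow> bool list" where
  "thr_seq a n = concat (map (\<lambda>i. replicate (a i) (even i)) [1..<n+1])"

(* Adjacency relation of the threshold graph with binary sequence s on vertices 0..<length s:
   for i < j, vertices i and j are adjacent iff vertex j was added as a dominating vertex. *)
definition thr_adj :: "bool list \<Rightarrow> nat \<Rightarrow> nat \<Rightarrow> bool" where
  "thr_adj s i j = ((i < j \<and> s ! j) \<or> (j < i \<and> s ! i))"

definition thr_adj_mat :: "bool list \<Rightarrow> real mat" where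
  "thr_adj_mat s = mat (length s) (length s) (\<lambda>(i, j). if thr_adj s i j then 1 else 0)"

definition spec_mult :: "real mat \<Rightarrow> real \<Rightarrow> nat" where
  "spec_mult A x = order x (char_poly A)"

definition cospectral :: "real mat \<Rightarrow> real mat \<Rightarrow> bool" where
  "cospectral A B \<longleftrightarrow> (\<forall>x. spec_mult A x = spec_mult B x)"

(* I_{n,l}: strictly increasing sequences (t_1,...,t_l) in {1..n} with t_i \<equiv> n+i-l (mod 2);
   represented as lists, list position k (0-based) corresponds to i = k+1. *)
definition I_set :: "nat \<Rightarrow> nat \<Rightarrow> nat list set" where
  "I_set n l = {ts. length ts = l \<and> sorted_wrt (<) ts \<and> set ts \<subseteq> {1..n} \<and>
       (\<forall>k<l. ts ! k mod 2 = (n + (k + 1) - l) mod 2)}"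

definition gamma :: "(nat \<Rightarrow> nat) \<Rightarrow> nat \<Rightarrow> nat \<Rightarrow> nat" where
  "gamma a n l = (if l = 0 then 1 else (\<Sum>ts\<in>I_set n l. \<Prod>k<l. a (ts ! k)))"

end

theory Submission
  imports Defs
begin

text \<open>Appending a vertex to a threshold graph borders both \<open>x I - A\<close> and \<open>x I - A + J\<close> by a
  constant row and column, so their determinants obey a first-order linear recursion; along a block
  of equal vertices it splits off a power of \<open>x\<close> (isolated block) or of \<open>x + 1\<close> (dominating
  block). Hence the characteristic polynomial is \<open>x ^ e\<^sub>0 * (x + 1) ^ e\<^sub>1 * F\<^sub>n\<close>, where
  \<open>F\<^sub>n\<close> satisfies a three-term recurrence and has coordinates \<open>\<gamma>\<^sub>n(l)\<close> in a basis of
  polynomials of degrees \<open>n - l\<close>. Cospectral graphs have the same characteristic polynomial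
  (adjacency matrices are real symmetric). Since \<open>F\<^sub>n(0) \<noteq> 0\<close> and \<open>-1\<close> is at most a simple
  root of \<open>F\<^sub>n\<close>, the orders at \<open>0\<close> and \<open>-1\<close> together with the degree force \<open>n = m\<close> and
  equal exponents; cancelling leaves \<open>F\<^sub>n\<close> equal for both graphs, so the coordinates \<open>\<gamma>\<close>
  agree.\<close>

section \<open>Cospectral real symmetric matrices\<close>

lemma real_symmetric_eigenvalue_real:
  fixes A :: "real mat"
  assumes A: "A \<in> carrier_mat N N"
    and sym: "\<And>i j. i < N \<Longrightarrow> j < N \<Longrightarrow> A $$ (i, j) = A $$ (j, i)"
    and ev: "eigenvalue (map_mat complex_of_real A) z"
  shows "Im z = 0"
proof -
  let ?C = "map_mat complex_of_real A"
  from ev obtain v where v: "v \<in> carrier_vec N" "v \<noteq> 0\<^sub>v N" "?C *\<^sub>v v = z \<cdot>\<^sub>v v"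
    unfolding eigenvalue_def eigenvector_def using A by auto
  have row: "(\<Sum>j<N. of_real (A $$ (i, j)) * v $ j) = z * v $ i" if "i < N" for i
  proof -
    have "(\<Sum>j<N. of_real (A $$ (i, j)) * v $ j) = (?C *\<^sub>v v) $ i"
      using that v(1) A by (auto simp: scalar_prod_def lessThan_atLeast0 mult.commute)
    also have "\<dots> = z * v $ i" using v that by auto
    finally show ?thesis .
  qed
  \<comment> \<open>The Rayleigh quotient \<open>v\<^sup>* C v / v\<^sup>* v\<close> equals \<open>z\<close>, and both quadratic forms are real.\<close>
  define S where "S = (\<Sum>i<N. cnj (v $ i) * (\<Sum>j<N. of_real (A $$ (i, j)) * v $ j))"
  define T where "T = (\<Sum>i<N. cnj (v $ i) * v $ i)"
  have "S = z * T" unfolding S_def T_def by (auto simp: row sum_distrib_left intro!: sum.cong)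
  have "cnj S = (\<Sum>i<N. \<Sum>j<N. of_real (A $$ (i, j)) * cnj (v $ j) * v $ i)"
    unfolding S_def by (simp add: sum_distrib_left mult_ac)
  also have "\<dots> = (\<Sum>j<N. \<Sum>i<N. of_real (A $$ (i, j)) * cnj (v $ j) * v $ i)"
    by (rule sum.swap)
  also have "\<dots> = S" unfolding S_def
    by (auto simp: sum_distrib_left mult_ac sym intro!: sum.cong)
  finally have "Im S = 0" by (metis cnj.simps(2) neg_equal_zero)
  have T_real: "T = of_real (\<Sum>i<N. (cmod (v $ i))\<^sup>2)"
    unfolding T_def by (simp add: complex_norm_square[symmetric] mult.commute del: of_real_power)
  obtain k where k: "k < N" "v $ k \<noteq> 0" using v by (metis eq_vecI carrier_vecD index_zero_vec)
  have "(cmod (v $ k))\<^sup>2 \<le> (\<Sum>i<N. (cmod (v $ i))\<^sup>2)"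
    by (rule member_le_sum) (use k in auto)
  moreover have "(cmod (v $ k))\<^sup>2 > 0" using k by simp
  ultimately have "(\<Sum>i<N. (cmod (v $ i))\<^sup>2) > 0" by linarith
  hence "Im T = 0" "Re T > 0" using T_real by auto
  with \<open>S = z * T\<close> \<open>Im S = 0\<close> show ?thesis by simp
qed

interpretation of_real_poly_hom: map_poly_inj_idom_hom "of_real :: real \<Rightarrow> complex" ..

lemma real_symmetric_char_poly_splits:
  fixes A :: "real mat"
  assumes A: "A \<in> carrier_mat N N"
    and sym: "\<And>i j. i < N \<Longrightarrow> j < N \<Longrightarrow> A $$ (i, j) = A $$ (j, i)"
  shows "\<exists>rs. char_poly A = (\<Prod>r\<leftarrow>rs. [:-r, 1:])"
proof -
  let ?C = "map_mat complex_of_real A"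
  have C: "?C \<in> carrier_mat N N" using A by auto
  obtain zs where zs: "char_poly ?C = (\<Prod>z\<leftarrow>zs. [:-z, 1:])"
    using char_poly_factorized[OF C] by auto
  have real: "Im z = 0" if "z \<in> set zs" for z
  proof -
    have "poly (char_poly ?C) z = 0" unfolding zs using that
      by (auto simp: poly_prod_list prod_list_zero_iff)
    hence "eigenvalue ?C z" using eigenvalue_root_char_poly[OF C] by auto
    thus ?thesis using real_symmetric_eigenvalue_real[OF A sym] by blast
  qed
  have "map (\<lambda>z. [:-z, 1:]) zs = map (\<lambda>z. map_poly complex_of_real [:-Re z, 1:]) zs"
    using real by (intro map_cong) (auto simp: complex_eq_iff)
  hence "map_poly complex_of_real (char_poly A) = map_poly complex_of_real (\<Prod>r\<leftarrow>map Re zs. [:-r, 1:])"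
    unfolding of_real_hom.char_poly_hom[OF A, symmetric] zs
    by (simp only: of_real_poly_hom.hom_prod_list map_map o_def)
  thus ?thesis by (intro exI[of _ "map Re zs"]) (rule of_real_poly_hom.injectivity)
qed

lemma order_prod_linear_factors:
  "order x (\<Prod>r\<leftarrow>rs. [:-r, 1:]) = count (mset rs) (x :: 'a :: idom)"
proof (induct rs)
  case Nil
  then show ?case by (simp add: order_0I)
next
  case (Cons r rs)
  have "order x ([:-r, 1:] * (\<Prod>r\<leftarrow>rs. [:-r, 1:])) = order x [:-r, 1:] + order x (\<Prod>r\<leftarrow>rs. [:-r, 1:])"
  proof (rule order_mult)
    show "[:-r, 1:] * (\<Prod>r\<leftarrow>rs. [:-r, 1:]) \<noteq> 0"
      by (simp only: mult_eq_0_iff prod_list_zero_iff) auto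
  qed
  moreover have "order x [:-r, 1:] = of_bool (x = r)"
    using order_power_n_n[of r 1] by (auto simp: order_0I)
  ultimately show ?case using Cons by auto
qed

lemma char_poly_eq_if_cospectral:
  fixes A B :: "real mat"
  assumes "A \<in> carrier_mat N N" "\<And>i j. i < N \<Longrightarrow> j < N \<Longrightarrow> A $$ (i, j) = A $$ (j, i)"
    and "B \<in> carrier_mat M M" "\<And>i j. i < M \<Longrightarrow> j < M \<Longrightarrow> B $$ (i, j) = B $$ (j, i)"
    and "cospectral A B"
  shows "char_poly A = char_poly B"
proof -
  obtain rs ss where rs: "char_poly A = (\<Prod>r\<leftarrow>rs. [:-r, 1:])" and ss: "char_poly B = (\<Prod>r\<leftarrow>ss. [:-r, 1:])"
    using real_symmetric_char_poly_splits assms(1-4) by metis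
  have "mset rs = mset ss"
    using assms(5) by (intro multiset_eqI)
      (simp add: cospectral_def spec_mult_def rs ss order_prod_linear_factors)
  hence "prod_mset (image_mset (\<lambda>r. [:-r, 1:]) (mset rs)) = prod_mset (image_mset (\<lambda>r. [:-r, 1:]) (mset ss))"
    by simp
  thus ?thesis unfolding rs ss by (metis prod_mset_prod_list mset_map)
qed

section \<open>The characteristic polynomial of a threshold graph\<close>

lemma det_constant_border:
  fixes K :: "'a :: idom mat" and u d :: 'a
  assumes K: "K \<in> carrier_mat N N"
  shows "det (four_block_mat K (mat N 1 (\<lambda>_. -u)) (mat 1 N (\<lambda>_. -u)) (mat 1 1 (\<lambda>_. d)))
       = (d + u) * det K - u * det (K + mat N N (\<lambda>_. u))"
proof -
  define K' where "K' = four_block_mat K (mat N 1 (\<lambda>_. -u)) (mat 1 N (\<lambda>_. -u)) (mat 1 1 (\<lambda>_. d))"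
  define B where "B = four_block_mat K (mat N 1 (\<lambda>_. -u)) (mat 1 N (\<lambda>_. -u)) (mat 1 1 (\<lambda>_. -u))"
  \<comment> \<open>\<open>K'\<close> and \<open>B\<close> differ only in the corner, so Laplace expansion along the last row compares them.\<close>
  have K'_carrier: "K' \<in> carrier_mat (N+1) (N+1)" and B_carrier: "B \<in> carrier_mat (N+1) (N+1)"
    unfolding K'_def B_def using K by auto
  have del: "mat_delete K' N j = mat_delete B N j" for j
    unfolding mat_delete_def K'_def B_def using K by (intro eq_matI) auto
  have del_corner: "mat_delete K' N N = K"
    unfolding mat_delete_def K'_def using K by (intro eq_matI) auto
  have same_row: "(\<Sum>j<N. K' $$ (N, j) * cofactor K' N j) = (\<Sum>j<N. B $$ (N, j) * cofactor B N j)"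
    unfolding cofactor_def del using K by (intro sum.cong) (auto simp: K'_def B_def)
  have "det K' = (\<Sum>j<N+1. K' $$ (N, j) * cofactor K' N j)"
    by (rule laplace_expansion_row[OF K'_carrier]) simp
  hence det_K': "det K' = (\<Sum>j<N. B $$ (N, j) * cofactor B N j) + d * det K"
    using same_row K by (simp add: cofactor_def del_corner) (simp add: K'_def)
  have "det B = (\<Sum>j<N+1. B $$ (N, j) * cofactor B N j)"
    by (rule laplace_expansion_row[OF B_carrier]) simp
  hence det_B: "det B = (\<Sum>j<N. B $$ (N, j) * cofactor B N j) - u * det K"
    using K by (simp add: cofactor_def del[symmetric] del_corner) (simp add: B_def)
  \<comment> \<open>Subtracting the last column of \<open>B\<close> from the others gives the block triangular \<open>C\<close>.\<close>
  define C where "C = four_block_mat (K + mat N N (\<lambda>_. u)) (mat N 1 (\<lambda>_. -u)) (0\<^sub>m 1 N) (mat 1 1 (\<lambda>_. -u))"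
  define E :: "'a mat" where "E = four_block_mat (1\<^sub>m N) (0\<^sub>m N 1) (mat 1 N (\<lambda>_. 1)) (1\<^sub>m 1)"
  have "C * E = four_block_mat ((K + mat N N (\<lambda>_. u)) * 1\<^sub>m N + mat N 1 (\<lambda>_. -u) * mat 1 N (\<lambda>_. 1))
      ((K + mat N N (\<lambda>_. u)) * 0\<^sub>m N 1 + mat N 1 (\<lambda>_. -u) * 1\<^sub>m 1)
      (0\<^sub>m 1 N * 1\<^sub>m N + mat 1 1 (\<lambda>_. -u) * mat 1 N (\<lambda>_. 1))
      (0\<^sub>m 1 N * 0\<^sub>m N 1 + mat 1 1 (\<lambda>_. -u) * 1\<^sub>m 1)"
    unfolding C_def E_def by (rule mult_four_block_mat) (use K in auto)
  also have "\<dots> = B" unfolding B_def using K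
    by (intro cong_four_block_mat eq_matI) (auto simp: scalar_prod_def)
  finally have CE: "C * E = B" .
  have "det C = det (K + mat N N (\<lambda>_. u)) * det (mat 1 1 (\<lambda>_. -u))"
    unfolding C_def by (rule det_four_block_mat_lower_left_zero) (use K in auto)
  hence det_C: "det C = - u * det (K + mat N N (\<lambda>_. u))" by (simp add: det_single)
  have "det E = det (1\<^sub>m N) * det (1\<^sub>m 1 :: 'a mat)"
    unfolding E_def by (rule det_four_block_mat_upper_right_zero) auto
  hence "det E = 1" by simp
  moreover have "det B = det C * det E" unfolding CE[symmetric]
    by (rule det_mult) (use K in \<open>auto simp: C_def E_def\<close>)
  ultimately have "det B = - u * det (K + mat N N (\<lambda>_. u))" using det_C by simp
  with det_K' det_B show ?thesis unfolding K'_def[symmetric] by (simp add: algebra_simps)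
qed

text \<open>Only
  \<open>t = 0\<close> (the characteristic matrix) and \<open>t = -1\<close> are needed: appending a vertex relates the
  determinants at these two values to each other.\<close>
definition thr_char_mat :: "bool list \<Rightarrow> real \<Rightarrow> real poly mat" where
  "thr_char_mat s t = mat (length s) (length s)
     (\<lambda>(i, j). (if i = j then [:0, 1:] else 0) - [:of_bool (thr_adj s i j) + t:])"

lemma char_poly_thr_adj_mat: "char_poly (thr_adj_mat s) = det (thr_char_mat s 0)"
  unfolding char_poly_def char_poly_matrix_def
  by (rule arg_cong[where f = det], rule eq_matI) (auto simp: thr_char_mat_def thr_adj_mat_def thr_adj_def)

lemma thr_char_mat_snoc:
  "thr_char_mat (s @ [c]) t = four_block_mat (thr_char_mat s t)
     (mat (length s) 1 (\<lambda>_. - [:of_bool c + t:])) (mat 1 (length s) (\<lambda>_. - [:of_bool c + t:]))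
     (mat 1 1 (\<lambda>_. [:0, 1:] - [:t:]))"
  by (rule eq_matI) (auto simp: thr_char_mat_def thr_adj_def nth_append)

lemma det_thr_char_mat_snoc:
  "det (thr_char_mat (s @ [c]) t)
     = [:of_bool c, 1:] * det (thr_char_mat s t) - [:of_bool c + t:] * det (thr_char_mat s (- of_bool c))"
proof -
  have "thr_char_mat s t + mat (length s) (length s) (\<lambda>_. [:of_bool c + t:]) = thr_char_mat s (- of_bool c)"
    by (rule eq_matI) (auto simp: thr_char_mat_def)
  moreover have "[:0, 1:] - [:t:] + [:of_bool c + t:] = [:of_bool c, 1:]"
    by simp
  ultimately show ?thesis
    unfolding thr_char_mat_snoc by (subst det_constant_border) (auto simp: thr_char_mat_def)
qed

lemma det_thr_char_mat_snoc_isolated: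
  "det (thr_char_mat (s @ [False]) 0) = [:0, 1:] * det (thr_char_mat s 0)"
  "det (thr_char_mat (s @ [False]) (-1)) = [:0, 1:] * det (thr_char_mat s (-1)) + det (thr_char_mat s 0)"
  by (simp_all add: det_thr_char_mat_snoc)

lemma det_thr_char_mat_snoc_dominating:
  "det (thr_char_mat (s @ [True]) 0) = [:1, 1:] * det (thr_char_mat s 0) - det (thr_char_mat s (-1))"
  "det (thr_char_mat (s @ [True]) (-1)) = [:1, 1:] * det (thr_char_mat s (-1))"
  by (simp_all add: det_thr_char_mat_snoc)

lemma det_thr_char_mat_isolated_block:
  "det (thr_char_mat (s @ replicate (Suc r) False) 0) = [:0, 1:] ^ Suc r * det (thr_char_mat s 0) \<and>
   det (thr_char_mat (s @ replicate (Suc r) False) (-1))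
     = [:0, 1:] ^ r * ([:0, 1:] * det (thr_char_mat s (-1)) + of_nat (Suc r) * det (thr_char_mat s 0))"
proof (induct r)
  case 0
  show ?case by (simp add: det_thr_char_mat_snoc_isolated)
next
  case (Suc r)
  have snoc: "s @ replicate (Suc (Suc r)) False = (s @ replicate (Suc r) False) @ [False]"
    by (simp add: replicate_append_same)
  show ?case
    unfolding snoc det_thr_char_mat_snoc_isolated Suc[THEN conjunct1] Suc[THEN conjunct2]
    by (simp add: algebra_simps)
qed

lemma det_thr_char_mat_dominating_block:
  "det (thr_char_mat (s @ replicate (Suc r) True) (-1)) = [:1, 1:] ^ Suc r * det (thr_char_mat s (-1)) \<and>
   det (thr_char_mat (s @ replicate (Suc r) True) 0)
     = [:1, 1:] ^ r * ([:1, 1:] * det (thr_char_mat s 0) - of_nat (Suc r) * det (thr_char_mat s (-1)))"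
proof (induct r)
  case 0
  show ?case by (simp add: det_thr_char_mat_snoc_dominating)
next
  case (Suc r)
  have snoc: "s @ replicate (Suc (Suc r)) True = (s @ replicate (Suc r) True) @ [True]"
    by (simp add: replicate_append_same)
  show ?case
    unfolding snoc det_thr_char_mat_snoc_dominating Suc[THEN conjunct1] Suc[THEN conjunct2]
    by (simp add: algebra_simps)
qed

section \<open>The invariants \<open>gamma\<close>\<close>

lemma length_le_if_sorted_wrt_less:
  assumes "sorted_wrt (<) ts" "set ts \<subseteq> {1..n}"
  shows "length ts \<le> n"
proof -
  have "length ts = card (set ts)"
    using assms(1) by (simp add: strict_sorted_iff distinct_card)
  also have "\<dots> \<le> card {1..n}" using assms(2) by (intro card_mono) auto
  finally show ?thesis by simp
qed

lemma I_set_0: "I_set n 0 = {[]}"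
  by (auto simp: I_set_def)

text \<open>The parity condition of \<open>I_set\<close> restated without the truncated subtraction
  \<open>n + (k + 1) - l\<close>, which never truncates since members have length \<open>l \<le> n\<close>.\<close>
lemma I_set_parity:
  "I_set n l = {ts. length ts = l \<and> sorted_wrt (<) ts \<and> set ts \<subseteq> {1..n} \<and>
     (\<forall>k<l. (ts ! k + l) mod 2 = (n + k + 1) mod 2)}"
proof -
  have parity: "x mod 2 = (n + (k + 1) - l) mod 2 \<longleftrightarrow> (x + l) mod 2 = (n + k + 1) mod 2"
    if "l \<le> n" for x k :: nat
  proof -
    obtain d where "n = l + d" using \<open>l \<le> n\<close> le_iff_add by blast
    then show ?thesis by (simp add: mod2_eq_if)
  qed
  show ?thesis unfolding I_set_def
  proof (intro Collect_cong conj_cong refl)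
    fix ts :: "nat list"
    assume "length ts = l" "sorted_wrt (<) ts" "set ts \<subseteq> {1..n}"
    then have "l \<le> n" using length_le_if_sorted_wrt_less by blast
    then show "(\<forall>k<l. ts ! k mod 2 = (n + (k + 1) - l) mod 2) \<longleftrightarrow>
        (\<forall>k<l. (ts ! k + l) mod 2 = (n + k + 1) mod 2)"
      by (simp only: parity)
  qed
qed

lemma finite_I_set: "finite (I_set n l)"
proof (rule finite_subset)
  show "I_set n l \<subseteq> {ts. set ts \<subseteq> {1..n} \<and> length ts = l}" by (auto simp: I_set_def)
qed (rule finite_lists_length_eq, simp)

lemma I_set_eq_empty: "n < l \<Longrightarrow> I_set n l = {}"
  using length_le_if_sorted_wrt_less by (fastforce simp: I_set_def)

lemma I_set_1_1: "I_set 1 1 = {[1]}"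
proof -
  have "ts = [1]" if "ts \<in> I_set 1 1" for ts
    using that by (cases ts) (auto simp: I_set_def)
  moreover have "[1] \<in> I_set 1 1" by (auto simp: I_set_def)
  ultimately show ?thesis by blast
qed

lemma I_set_Suc_Suc:
  "I_set (Suc (Suc n)) (Suc l) = I_set n (Suc l) \<union> (\<lambda>us. us @ [Suc (Suc n)]) ` I_set (Suc n) l"
  (is "?L = ?R")
proof (intro equalityI subsetI)
  fix ts assume ts: "ts \<in> ?L"
  then have "ts \<noteq> []" by (auto simp: I_set_def)
  then obtain us x where ts_eq: "ts = us @ [x]" by (metis rev_exhaust)
  have us: "length us = l" "sorted_wrt (<) us" "set us \<subseteq> {1..Suc (Suc n)}" "\<forall>y\<in>set us. y < x"
    and x: "1 \<le> x" "x \<le> Suc (Suc n)"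
    and par: "\<And>k. k < Suc l \<Longrightarrow> ((us @ [x]) ! k + Suc l) mod 2 = (Suc (Suc n) + k + 1) mod 2"
    using ts unfolding ts_eq I_set_parity by (auto simp: sorted_wrt_append)
  have "(x + Suc l) mod 2 = (Suc (Suc n) + l + 1) mod 2"
    using par[of l] us(1) by (simp add: nth_append)
  hence "x \<noteq> Suc n" by (auto simp: mod2_eq_if split: if_splits)
  show "ts \<in> ?R"
  proof (cases "x = Suc (Suc n)")
    case True
    have "set us \<subseteq> {1..Suc n}" using us(3,4) True by (auto simp: subset_iff less_Suc_eq_le)
    moreover have "(us ! k + l) mod 2 = (Suc n + k + 1) mod 2" if "k < l" for k
      using par[of k] that us(1) by (simp add: nth_append mod2_eq_if split: if_splits)
    ultimately have "us \<in> I_set (Suc n) l" using us(1,2) unfolding I_set_parity by blast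
    thus ?thesis using ts_eq True by blast
  next
    case False
    with x \<open>x \<noteq> Suc n\<close> have "x \<le> n" by linarith
    have "set ts \<subseteq> {1..n}" using us(3,4) x \<open>x \<le> n\<close> unfolding ts_eq by (auto simp: subset_iff)
    moreover have "(ts ! k + Suc l) mod 2 = (n + k + 1) mod 2" if "k < Suc l" for k
      using par[OF that] unfolding ts_eq by (simp add: mod2_eq_if split: if_splits)
    ultimately have "ts \<in> I_set n (Suc l)" using ts unfolding I_set_parity by blast
    thus ?thesis by blast
  qed
next
  fix ts assume "ts \<in> ?R"
  then consider "ts \<in> I_set n (Suc l)" | us where "us \<in> I_set (Suc n) l" "ts = us @ [Suc (Suc n)]"
    by blast
  then show "ts \<in> ?L"
  proof cases
    case 1
    hence "set ts \<subseteq> {1..Suc (Suc n)}" unfolding I_set_parity by auto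
    moreover have "(ts ! k + Suc l) mod 2 = (Suc (Suc n) + k + 1) mod 2" if "k < Suc l" for k
      using 1 that unfolding I_set_parity by (simp add: mod2_eq_if split: if_splits)
    ultimately show ?thesis using 1 unfolding I_set_parity by blast
  next
    case 2
    have us: "length us = l" "sorted_wrt (<) us" "set us \<subseteq> {1..Suc n}"
      and par: "\<And>k. k < l \<Longrightarrow> (us ! k + l) mod 2 = (Suc n + k + 1) mod 2"
      using 2(1) unfolding I_set_parity by auto
    have "sorted_wrt (<) ts" using us(2,3) 2(2) by (auto simp: sorted_wrt_append)
    moreover have "set ts \<subseteq> {1..Suc (Suc n)}" using us(3) 2(2) by auto
    moreover have "(ts ! k + Suc l) mod 2 = (Suc (Suc n) + k + 1) mod 2" if "k < Suc l" for k
    proof (cases "k < l")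
      case True
      then show ?thesis using par[OF True] us(1) 2(2) by (simp add: nth_append mod2_eq_if split: if_splits)
    next
      case False
      with that have "k = l" by simp
      then show ?thesis using us(1) 2(2) by (simp add: nth_append)
    qed
    ultimately show ?thesis using us(1) 2(2) unfolding I_set_parity by simp
  qed
qed

lemma gamma_0 [simp]: "gamma a n 0 = 1"
  by (simp add: gamma_def)

lemma gamma_eq_sum: "gamma a n l = (\<Sum>ts\<in>I_set n l. \<Prod>k<l. a (ts ! k))"
  by (simp add: gamma_def I_set_0)

lemma gamma_eq_0: "n < l \<Longrightarrow> gamma a n l = 0"
  by (simp add: gamma_eq_sum I_set_eq_empty)

lemma gamma_1_1: "gamma a 1 1 = a 1"
  unfolding gamma_eq_sum I_set_1_1 by simp

lemma gamma_Suc_Suc: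
  "gamma a (Suc (Suc n)) (Suc l) = gamma a n (Suc l) + a (Suc (Suc n)) * gamma a (Suc n) l"
proof -
  let ?snoc = "\<lambda>us. us @ [Suc (Suc n)]"
  have disjoint: "I_set n (Suc l) \<inter> ?snoc ` I_set (Suc n) l = {}"
    by (auto simp: I_set_def)
  have "gamma a (Suc (Suc n)) (Suc l)
      = gamma a n (Suc l) + (\<Sum>ts\<in>?snoc ` I_set (Suc n) l. \<Prod>k<Suc l. a (ts ! k))"
    unfolding gamma_eq_sum I_set_Suc_Suc
    by (rule sum.union_disjoint[OF finite_I_set finite_imageI[OF finite_I_set] disjoint])
  also have "(\<Sum>ts\<in>?snoc ` I_set (Suc n) l. \<Prod>k<Suc l. a (ts ! k))
      = (\<Sum>us\<in>I_set (Suc n) l. \<Prod>k<Suc l. a ((us @ [Suc (Suc n)]) ! k))"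
    by (rule sum.reindex_cong[of ?snoc]) (auto simp: inj_on_def)
  also have "\<dots> = (\<Sum>us\<in>I_set (Suc n) l. a (Suc (Suc n)) * (\<Prod>k<l. a (us ! k)))"
    by (rule sum.cong) (auto simp: I_set_def prod.lessThan_Suc nth_append)
  also have "\<dots> = a (Suc (Suc n)) * gamma a (Suc n) l"
    by (simp add: gamma_eq_sum sum_distrib_left)
  finally show ?thesis .
qed

section \<open>The reduced characteristic polynomial\<close>

lemma sum_smult_eq_0_imp_coeff_eq_0:
  fixes p :: "nat \<Rightarrow> 'a :: idom poly"
  assumes "\<And>l. l \<le> k \<Longrightarrow> p l \<noteq> 0 \<and> degree (p l) = k - l"
    and "(\<Sum>l\<le>k. Polynomial.smult (c l) (p l)) = 0" and "l \<le> k"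
  shows "c l = 0"
  using assms
proof (induct k arbitrary: p c l)
  case 0
  then show ?case by simp
next
  case (Suc k)
  \<comment> \<open>Only \<open>p 0\<close> reaches degree \<open>Suc k\<close>, so the top coefficient isolates \<open>c 0\<close>.\<close>
  have top: "coeff (\<Sum>l\<le>Suc k. Polynomial.smult (c l) (p l)) (Suc k) = c 0 * lead_coeff (p 0)"
  proof -
    have "coeff (p (Suc l)) (Suc k) = 0" if "l \<le> k" for l
      using Suc.prems(1)[of "Suc l"] that by (intro coeff_eq_0) auto
    then show ?thesis
      using Suc.prems(1)[of 0] unfolding sum.atMost_Suc_shift coeff_add coeff_sum by simp
  qed
  then have "c 0 * lead_coeff (p 0) = 0" unfolding Suc.prems(2) by simp
  moreover have "lead_coeff (p 0) \<noteq> 0"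
    using Suc.prems(1)[of 0] by (intro leading_coeff_neq_0) simp
  ultimately have c0: "c 0 = 0" by simp
  have rest: "(\<Sum>l\<le>k. Polynomial.smult (c (Suc l)) (p (Suc l))) = 0"
    using Suc.prems(2) unfolding sum.atMost_Suc_shift c0 by simp
  have rest_degree: "p (Suc l) \<noteq> 0 \<and> degree (p (Suc l)) = k - l" if "l \<le> k" for l
    using Suc.prems(1)[of "Suc l"] that by simp
  have "c (Suc l) = 0" if "l \<le> k" for l
    using Suc.hyps[of "\<lambda>l. p (Suc l)" "\<lambda>l. c (Suc l)" l] rest_degree rest that by blast
  with c0 Suc.prems(3) show ?case by (cases l) auto
qed

lemma order_le_1_if_poly_pderiv_neq_0:
  fixes p :: "'a :: field_char_0 poly"
  assumes "poly (pderiv p) x \<noteq> 0"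
  shows "order x p \<le> 1"
proof (cases "poly p x = 0")
  case True
  have "p \<noteq> 0" using assms by auto
  with True have "order x p = Suc (order x (pderiv p))" by (intro order_pderiv)
  with assms show ?thesis by (simp add: order_0I)
qed (simp add: order_0I)

text \<open>\<open>thr_basis k l = \<plusminus>(x (x + 1)) ^ ((k - l) div 2) * x ^ ((k - l) mod 2)\<close> for \<open>l \<le> k\<close>.\<close>
fun thr_basis :: "nat \<Rightarrow> nat \<Rightarrow> real poly" where
  "thr_basis k 0 = ([:0, 1:] * [:1, 1:]) ^ (k div 2) * [:0, 1:] ^ (k mod 2)"
| "thr_basis k (Suc l) = Polynomial.smult (if even k then -1 else 1) (thr_basis (k - 1) l)"

definition thr_poly :: "(nat \<Rightarrow> nat) \<Rightarrow> nat \<Rightarrow> real poly" where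
  "thr_poly a k = (\<Sum>l\<le>k. Polynomial.smult (of_nat (gamma a k l)) (thr_basis k l))"

lemma thr_basis_Suc_Suc: "l \<le> k \<Longrightarrow> thr_basis (Suc (Suc k)) l = [:0, 1:] * [:1, 1:] * thr_basis k l"
proof (induct l arbitrary: k)
  case 0
  then show ?case by (simp add: algebra_simps)
next
  case (Suc l)
  then obtain j where "k = Suc j" by (cases k) auto
  with Suc show ?case by (simp add: algebra_simps)
qed

lemma thr_basis_degree: "l \<le> k \<Longrightarrow> thr_basis k l \<noteq> 0 \<and> degree (thr_basis k l) = k - l"
proof (induct l arbitrary: k)
  case 0
  have "[:0, 1:] * [:1, 1:] = [:0, 1, 1 :: real:]" by simp
  then show ?case by (simp add: degree_mult_eq degree_power_eq) presburger
next
  case (Suc l)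
  then show ?case by simp
qed

lemma gamma_eq_if_thr_poly_eq:
  assumes "thr_poly a k = thr_poly b k" "l \<le> k"
  shows "gamma a k l = gamma b k l"
proof -
  have "(\<Sum>l\<le>k. Polynomial.smult (of_nat (gamma a k l) - of_nat (gamma b k l)) (thr_basis k l)) = 0"
    using assms(1) by (simp add: thr_poly_def smult_diff_left sum_subtractf)
  from thr_basis_degree this assms(2) have "real (gamma a k l) - real (gamma b k l) = 0"
    by (rule sum_smult_eq_0_imp_coeff_eq_0[where c = "\<lambda>l. real (gamma a k l) - real (gamma b k l)"])
  then show ?thesis by simp
qed

lemma thr_poly_0: "thr_poly a 0 = 1"
  by (simp add: thr_poly_def)

lemma thr_poly_1: "thr_poly a (Suc 0) = [:of_nat (a (Suc 0)), 1:]"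
  using gamma_1_1[of a] by (simp add: thr_poly_def)

lemma thr_poly_Suc_Suc:
  "thr_poly a (Suc (Suc k)) = [:0, 1:] * [:1, 1:] * thr_poly a k
     + Polynomial.smult ((if even k then -1 else 1) * of_nat (a (Suc (Suc k)))) (thr_poly a (Suc k))"
proof -
  let ?g = "\<lambda>n l. Polynomial.smult (of_nat (gamma a n l)) (thr_basis (Suc (Suc k)) l)"
  let ?h = "\<lambda>l. Polynomial.smult (of_nat (a (Suc (Suc k)) * gamma a (Suc k) l)) (thr_basis (Suc (Suc k)) (Suc l))"
  have split: "thr_poly a (Suc (Suc k)) = ?g (Suc (Suc k)) 0 + (\<Sum>l\<le>Suc k. ?g (Suc (Suc k)) (Suc l))"
    unfolding thr_poly_def by (rule sum.atMost_Suc_shift)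
  have distrib: "(\<Sum>l\<le>Suc k. ?g (Suc (Suc k)) (Suc l)) = (\<Sum>l\<le>Suc k. ?g k (Suc l)) + (\<Sum>l\<le>Suc k. ?h l)"
    unfolding gamma_Suc_Suc of_nat_add smult_add_left by (rule sum.distrib)
  have odd_part: "(\<Sum>l\<le>Suc k. ?h l)
      = Polynomial.smult ((if even k then -1 else 1) * of_nat (a (Suc (Suc k)))) (thr_poly a (Suc k))"
    unfolding thr_poly_def smult_sum2 by (rule sum.cong) (simp_all add: mult_ac)
  have "?g (Suc (Suc k)) 0 + (\<Sum>l\<le>Suc k. ?g k (Suc l)) = (\<Sum>l\<le>Suc (Suc k). ?g k l)"
    by (simp only: sum.atMost_Suc_shift gamma_0)
  also have "\<dots> = (\<Sum>l\<le>k. ?g k l)"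
    by (simp add: gamma_eq_0)
  also have "\<dots> = [:0, 1:] * [:1, 1:] * thr_poly a k"
    unfolding thr_poly_def sum_distrib_left by (rule sum.cong) (auto simp: thr_basis_Suc_Suc)
  finally have even_part: "?g (Suc (Suc k)) 0 + (\<Sum>l\<le>Suc k. ?g k (Suc l)) = [:0, 1:] * [:1, 1:] * thr_poly a k" .
  show ?thesis
    unfolding split distrib add.assoc[symmetric] even_part odd_part ..
qed

lemma poly_thr_poly_0:
  assumes "\<And>i. 1 \<le> i \<Longrightarrow> i \<le> k \<Longrightarrow> 0 < a i"
  shows "poly (thr_poly a k) 0 \<noteq> 0"
  using assms
proof (induct k rule: induct_nat_012)
  case (ge2 k)
  then show ?case by (simp add: thr_poly_Suc_Suc)
qed (simp_all add: thr_poly_0 thr_poly_1)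

lemma poly_thr_poly_minus_1:
  assumes "\<And>i. 1 \<le> i \<Longrightarrow> i \<le> k \<Longrightarrow> 0 < a i" and "a 1 \<noteq> 1"
  shows "poly (thr_poly a k) (-1) \<noteq> 0"
  using assms
proof (induct k rule: induct_nat_012)
  case (ge2 k)
  then show ?case by (simp add: thr_poly_Suc_Suc)
qed (simp_all add: thr_poly_0 thr_poly_1)

lemma poly_pderiv_thr_poly_minus_1:
  assumes "\<And>i. 1 \<le> i \<Longrightarrow> i \<le> k \<Longrightarrow> 0 < a i" and "a 1 = 1" and "1 \<le> k"
  shows "poly (thr_poly a k) (-1) = 0 \<and> poly (pderiv (thr_poly a k)) (-1) \<noteq> 0"
  using assms
proof (induct k rule: induct_nat_012)
  case (ge2 k)
  have IH: "poly (thr_poly a (Suc k)) (-1) = 0" "poly (pderiv (thr_poly a (Suc k))) (-1) \<noteq> 0"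
    using ge2 by simp_all
  have "poly (pderiv ([:0, 1:] * [:1, 1:] * p)) (-1) = - poly p (-1)" for p :: "real poly"
    by (simp add: pderiv_mult pderiv_add pderiv_pCons)
  then have deriv: "poly (pderiv (thr_poly a (Suc (Suc k)))) (-1)
      = - poly (thr_poly a k) (-1)
        + (if even k then -1 else 1) * of_nat (a (Suc (Suc k))) * poly (pderiv (thr_poly a (Suc k))) (-1)"
    unfolding thr_poly_Suc_Suc by (simp add: pderiv_add pderiv_smult)
  show ?case
  proof (cases k)
    case 0
    then have "poly (pderiv (thr_poly a (Suc (Suc k)))) (-1) = -1 - of_nat (a 2)"
      unfolding deriv by (simp add: thr_poly_0 thr_poly_1 ge2.prems(2) pderiv_pCons numeral_2_eq_2)
    then show ?thesis using IH by (simp add: thr_poly_Suc_Suc)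
  next
    case (Suc j)
    then have "poly (thr_poly a k) (-1) = 0" using ge2 by simp
    then show ?thesis using IH deriv ge2.prems(1)[of "Suc (Suc k)"] by (simp add: thr_poly_Suc_Suc)
  qed
qed (simp_all add: thr_poly_1 pderiv_pCons)

lemma order_thr_poly_minus_1:
  assumes "\<And>i. 1 \<le> i \<Longrightarrow> i \<le> k \<Longrightarrow> 0 < a i"
  shows "order (-1) (thr_poly a k) \<le> 1"
proof -
  consider "a 1 \<noteq> 1" | "k = 0" | "a 1 = 1" "1 \<le> k" by linarith
  then show ?thesis
  proof cases
    case 1
    then show ?thesis using poly_thr_poly_minus_1[of k a] assms by (simp add: order_0I)
  next
    case 2
    then show ?thesis by (simp add: thr_poly_0 order_0I)
  next
    case 3
    then show ?thesis
      using poly_pderiv_thr_poly_minus_1[of k a] assms order_le_1_if_poly_pderiv_neq_0 by blast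
  qed
qed

section \<open>Cospectral threshold graphs\<close>

text \<open>A block of \<open>r\<close> equal vertices contributes the eigenvalue \<open>0\<close> (isolated block) or
  \<open>-1\<close> (dominating block) with multiplicity \<open>r - 1\<close>.\<close>
primrec isolated_excess :: "(nat \<Rightarrow> nat) \<Rightarrow> nat \<Rightarrow> nat" where
  "isolated_excess a 0 = 0"
| "isolated_excess a (Suc k) = isolated_excess a k + (if odd (Suc k) then a (Suc k) - 1 else 0)"

primrec dominating_excess :: "(nat \<Rightarrow> nat) \<Rightarrow> nat \<Rightarrow> nat" where
  "dominating_excess a 0 = 0"
| "dominating_excess a (Suc k) = dominating_excess a k + (if even (Suc k) then a (Suc k) - 1 else 0)"

lemma thr_seq_Suc: "thr_seq a (Suc k) = thr_seq a k @ replicate (a (Suc k)) (even (Suc k))"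
  by (simp add: thr_seq_def)

lemma length_thr_seq: "length (thr_seq a k) = (\<Sum>i=1..k. a i)"
  by (induct k) (simp_all add: thr_seq_def)

lemma isolated_excess_add_dominating_excess:
  assumes "\<And>i. 1 \<le> i \<Longrightarrow> i \<le> k \<Longrightarrow> 0 < a i"
  shows "isolated_excess a k + dominating_excess a k + k = (\<Sum>i=1..k. a i)"
  using assms
proof (induct k)
  case (Suc k)
  then have "0 < a (Suc k)" "isolated_excess a k + dominating_excess a k + k = (\<Sum>i=1..k. a i)"
    by simp_all
  then show ?case by simp
qed simp

lemma det_thr_char_mat_thr_seq:
  assumes "1 \<le> k" and "\<And>i. 1 \<le> i \<Longrightarrow> i \<le> k \<Longrightarrow> 0 < a i"
  shows "det (thr_char_mat (thr_seq a k) 0) = [:0, 1:] ^ isolated_excess a k * [:1, 1:] ^ dominating_excess a k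
       * (if even k then thr_poly a k else [:0, 1:] * thr_poly a (k - 1)) \<and>
    det (thr_char_mat (thr_seq a k) (-1)) = [:0, 1:] ^ isolated_excess a k * [:1, 1:] ^ dominating_excess a k
       * (if even k then [:1, 1:] * thr_poly a (k - 1) else thr_poly a k)"
  using assms
proof (induct k rule: nat_induct_at_least)
  case base
  obtain r where r: "a (Suc 0) = Suc r" using base.prems[of 1] by (cases "a (Suc 0)") auto
  have "thr_seq a 1 = [] @ replicate (Suc r) False" by (simp add: thr_seq_def r)
  moreover have "det (thr_char_mat [] t) = 1" for t by (simp add: thr_char_mat_def)
  ultimately show ?case
    using det_thr_char_mat_isolated_block[of "[]" r] r
    by (simp add: thr_poly_0 thr_poly_1 of_nat_poly del: mult_pCons_left mult_pCons_right)
next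
  case (Suc k)
  obtain r where r: "a (Suc k) = Suc r" using Suc.prems[of "Suc k"] by (cases "a (Suc k)") auto
  obtain j where j: "k = Suc j" using \<open>1 \<le> k\<close> by (cases k) auto
  have IH: "det (thr_char_mat (thr_seq a k) 0) = [:0, 1:] ^ isolated_excess a k * [:1, 1:] ^ dominating_excess a k
       * (if even k then thr_poly a k else [:0, 1:] * thr_poly a j)"
    "det (thr_char_mat (thr_seq a k) (-1)) = [:0, 1:] ^ isolated_excess a k * [:1, 1:] ^ dominating_excess a k
       * (if even k then [:1, 1:] * thr_poly a j else thr_poly a k)"
    using Suc j by simp_all
  show ?case
  proof (cases "even k")
    case True
    have seq: "thr_seq a (Suc k) = thr_seq a k @ replicate (Suc r) False"
      using True r by (simp add: thr_seq_Suc)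
    have rec: "thr_poly a (Suc k) = [:0, 1:] * [:1, 1:] * thr_poly a j + of_nat (Suc r) * thr_poly a k"
      using True r j by (simp add: thr_poly_Suc_Suc of_nat_poly)
    have "isolated_excess a (Suc k) = isolated_excess a k + r" "dominating_excess a (Suc k) = dominating_excess a k"
      using True r by simp_all
    then show ?thesis
      using det_thr_char_mat_isolated_block[of "thr_seq a k" r] IH True
      unfolding seq rec by (simp add: power_add algebra_simps del: mult_pCons_left mult_pCons_right)
  next
    case False
    have seq: "thr_seq a (Suc k) = thr_seq a k @ replicate (Suc r) True"
      using False r by (simp add: thr_seq_Suc)
    have rec: "thr_poly a (Suc k) = [:0, 1:] * [:1, 1:] * thr_poly a j - of_nat (Suc r) * thr_poly a k"
      using False r j by (simp add: thr_poly_Suc_Suc of_nat_poly flip: smult_minus_left)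
    have "isolated_excess a (Suc k) = isolated_excess a k" "dominating_excess a (Suc k) = dominating_excess a k + r"
      using False r by simp_all
    then show ?thesis
      using det_thr_char_mat_dominating_block[of "thr_seq a k" r] IH False
      unfolding seq rec by (simp add: power_add algebra_simps del: mult_pCons_left mult_pCons_right)
  qed
qed

lemma char_poly_thr_seq:
  assumes "even n" "2 \<le> n" and "\<And>i. 1 \<le> i \<Longrightarrow> i \<le> n \<Longrightarrow> 0 < a i"
  shows "char_poly (thr_adj_mat (thr_seq a n))
    = [:0, 1:] ^ isolated_excess a n * [:1, 1:] ^ dominating_excess a n * thr_poly a n"
  using det_thr_char_mat_thr_seq[of n a] assms by (simp add: char_poly_thr_adj_mat)

lemma char_poly_thr_seq_roots_degree:
  assumes "even n" "2 \<le> n" and pos: "\<And>i. 1 \<le> i \<Longrightarrow> i \<le> n \<Longrightarrow> 0 < a i"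
  defines "P \<equiv> char_poly (thr_adj_mat (thr_seq a n))"
  shows "order 0 P = isolated_excess a n"
    and "dominating_excess a n \<le> order (-1) P" "order (-1) P \<le> dominating_excess a n + 1"
    and "degree P = isolated_excess a n + dominating_excess a n + n"
proof -
  have F: "thr_poly a n \<noteq> 0" "order 0 (thr_poly a n) = 0"
    using poly_thr_poly_0[of n a] pos by (auto intro: order_0I)
  have P_eq: "P = [:0, 1:] ^ isolated_excess a n * [:1, 1:] ^ dominating_excess a n * thr_poly a n"
    unfolding P_def using assms(1-3) by (rule char_poly_thr_seq)
  have "[:0, 1:] ^ isolated_excess a n * [:1, 1:] ^ dominating_excess a n \<noteq> (0 :: real poly)"
    by simp
  with F(1) have "order x P = order x ([:0, 1:] ^ isolated_excess a n)
      + order x ([:1, 1:] ^ dominating_excess a n) + order x (thr_poly a n)" for x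
    unfolding P_eq by (simp add: order_mult)
  moreover have "order 0 ([:0, 1:] ^ e :: real poly) = e" "order (-1) ([:1, 1:] ^ e :: real poly) = e" for e
    using order_power_n_n[of "0 :: real" e] order_power_n_n[of "-1 :: real" e] by simp_all
  moreover have "order (-1) ([:0, 1:] ^ e :: real poly) = 0" "order 0 ([:1, 1:] ^ e :: real poly) = 0" for e
    by (simp_all add: order_0I)
  ultimately show "order 0 P = isolated_excess a n"
    and "dominating_excess a n \<le> order (-1) P" "order (-1) P \<le> dominating_excess a n + 1"
    using F(2) order_thr_poly_minus_1[of n a] pos by simp_all
  have "degree P = length (thr_seq a n)"
    unfolding P_def by (rule degree_monic_char_poly[THEN conjunct1]) (simp add: thr_adj_mat_def)
  with isolated_excess_add_dominating_excess[of n a] pos show "degree P = isolated_excess a n + dominating_excess a n + n"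
    by (simp add: length_thr_seq)
qed

lemma thr_adj_mat_carrier: "thr_adj_mat s \<in> carrier_mat (length s) (length s)"
  by (simp add: thr_adj_mat_def)

lemma thr_adj_mat_symmetric:
  "i < length s \<Longrightarrow> j < length s \<Longrightarrow> thr_adj_mat s $$ (i, j) = thr_adj_mat s $$ (j, i)"
  by (auto simp: thr_adj_mat_def thr_adj_def)

theorem lemma2:
  fixes a b :: "nat \<Rightarrow> nat" and n m :: nat
  assumes "even n" "n \<ge> 2" "even m" "m \<ge> 2"
    and "\<And>i. 1 \<le> i \<Longrightarrow> i \<le> n \<Longrightarrow> a i > 0"
    and "\<And>j. 1 \<le> j \<Longrightarrow> j \<le> m \<Longrightarrow> b j > 0"
    and "cospectral (thr_adj_mat (thr_seq a n)) (thr_adj_mat (thr_seq b m))"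
  shows "n = m \<and> (\<forall>l\<le>n. gamma a n l = gamma b n l)"
proof -
  have same: "char_poly (thr_adj_mat (thr_seq a n)) = char_poly (thr_adj_mat (thr_seq b m))"
    by (rule char_poly_eq_if_cospectral[OF thr_adj_mat_carrier thr_adj_mat_symmetric
          thr_adj_mat_carrier thr_adj_mat_symmetric assms(7)])
  note A = char_poly_thr_seq_roots_degree[of n a, OF assms(1,2,5)]
  note B = char_poly_thr_seq_roots_degree[of m b, OF assms(3,4,6)]
  have isolated: "isolated_excess a n = isolated_excess b m"
    using A(1) B(1) same by simp
  have "dominating_excess a n + n = dominating_excess b m + m"
    using A(4) B(4) same isolated by simp
  moreover have "dominating_excess a n \<le> dominating_excess b m + 1" "dominating_excess b m \<le> dominating_excess a n + 1"
    using A(2,3) B(2,3) same by simp_all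
  ultimately have "n \<le> m + 1" "m \<le> n + 1" by linarith+
  with assms(1,3) have n_eq_m: "n = m" by presburger
  with \<open>dominating_excess a n + n = dominating_excess b m + m\<close>
  have dominating: "dominating_excess a n = dominating_excess b m" by simp
  have "[:0, 1:] ^ isolated_excess b m * [:1, 1:] ^ dominating_excess b m * thr_poly a n
      = [:0, 1:] ^ isolated_excess b m * [:1, 1:] ^ dominating_excess b m * thr_poly b m"
    using same char_poly_thr_seq[of n a, OF assms(1,2,5)] char_poly_thr_seq[of m b, OF assms(3,4,6)]
    unfolding isolated dominating by simp
  then have "thr_poly a n = thr_poly b n"
    unfolding n_eq_m by (subst (asm) mult_left_cancel) simp_all
  then show ?thesis using n_eq_m gamma_eq_if_thr_poly_eq by blast
qed

end
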